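(* For every $g\in{}^\flat\widetilde L_+^\downarrow$ one has $g^*=g\tau$, where $*$ is the complex conjugation of $(\widetilde L_+^\uparrow)^{\mathbb C}\cong L_+(\mathbb C)^\wedge$.
   Context: $M$ is a real vector space of dimension $d\ge3$ with Lorentzian inner product $\eta$; $L_+^\uparrow$ the identity component of the Lorentz group, $L_+^\downarrow$ the determinant-one time-orientation-reversing component. $L_+(\mathbb C)$ is the group of complex determinant-one isometries of $(M^{\mathbb C},\eta^{\mathbb C})$; $\pi\colon L_+(\mathbb C)^\wedge\to L_+(\mathbb C)$ its universal cover, a double cover, with $\pi^{-1}(1)=\{1,\tau\}$. $\widetilde L_+^\uparrow=\pi^{-1}(L_+^\uparrow)$, ${}^\flat\widetilde L_+^\downarrow=\pi^{-1}(L_+^\downarrow)$. The inclusion $\widetilde L_+^\uparrow\subset L_+(\mathbb C)^\wedge$ identifies $L_+(\mathbb C)^\wedge$ with the complexification $(\widetilde L_+^\uparrow)^{\mathbb C}$. For a connected Lie group $G$, complex conjugation $*_G$ on $G^{\mathbb C}$ is the (anti-holomorphic) automorphism whose derivative at the identity is the complex conjugation $a+ib\mapsto a-ib$ of $\mathrm{Lie}(G^{\mathbb C})=\mathrm{Lie}(G)\otimes\mathbb C$. *)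

theory Defs
  imports Complex_Main "Jordan_Normal_Form.Determinant"
begin

text \<open>M = R^d with standard basis e_0,...,e_(d-1) and
  Lorentzian form eta = diag(1,-1,...,-1).  The universal (double) cover
  of L_+(C) = SO(d,C) is realised as the complex spin group inside the
  complex Clifford algebra Cl(M^C, eta^C).  Clifford algebra elements are
  coefficient functions on basis blades e_A, A a subset of {0..<d}.\<close>

definition eta_diag :: "nat \<Rightarrow> complex" where
  "eta_diag i = (if i = 0 then 1 else -1)"

definition blade_sign :: "nat set \<Rightarrow> nat set \<Rightarrow> complex" where
  "blade_sign A B =
     (-1) ^ card {(a, b). a \<in> A \<and> b \<in> B \<and> b < a} * (\<Prod>c\<in>A \<inter> B. eta_diag c)"

definition cl_elem :: "nat \<Rightarrow> (nat set \<Rightarrow> complex) \<Rightarrow> bool" where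
  "cl_elem d x \<longleftrightarrow> (\<forall>A. \<not> A \<subseteq> {..<d} \<longrightarrow> x A = 0)"

text \<open>Clifford product: e_A e_B = blade_sign A B e_(A symmetric-difference B).\<close>
definition cl_mult :: "nat \<Rightarrow> (nat set \<Rightarrow> complex) \<Rightarrow> (nat set \<Rightarrow> complex) \<Rightarrow> (nat set \<Rightarrow> complex)" where
  "cl_mult d x y = (\<lambda>C. \<Sum>A\<in>Pow {..<d}. blade_sign A (A - C \<union> (C - A)) * x A * y (A - C \<union> (C - A)))"

definition cl_one :: "nat set \<Rightarrow> complex" where
  "cl_one = (\<lambda>A. if A = {} then 1 else 0)"

definition cl_vec :: "nat \<Rightarrow> (nat \<Rightarrow> complex) \<Rightarrow> (nat set \<Rightarrow> complex)" where
  "cl_vec d v = (\<lambda>A. if \<exists>i<d. A = {i} then v (the_elem A) else 0)"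

definition cl_basis :: "nat \<Rightarrow> nat \<Rightarrow> (nat set \<Rightarrow> complex)" where
  "cl_basis d j = cl_vec d (\<lambda>i. if i = j then 1 else 0)"

definition cl_even :: "(nat set \<Rightarrow> complex) \<Rightarrow> bool" where
  "cl_even x \<longleftrightarrow> (\<forall>A. odd (card A) \<longrightarrow> x A = 0)"

definition cl_rev :: "(nat set \<Rightarrow> complex) \<Rightarrow> (nat set \<Rightarrow> complex)" where
  "cl_rev x = (\<lambda>A. (-1) ^ (card A * (card A - 1) div 2) * x A)"

definition spin_group :: "nat \<Rightarrow> (nat set \<Rightarrow> complex) set" where
  "spin_group d = {x. cl_elem d x \<and> cl_even x
      \<and> cl_mult d x (cl_rev x) = cl_one \<and> cl_mult d (cl_rev x) x = cl_one
      \<and> (\<forall>v. \<exists>w. cl_mult d (cl_mult d x (cl_vec d v)) (cl_rev x) = cl_vec d w)}"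

text \<open>The covering map pi : Spin(d,C) -> L_+(C), as a complex d x d matrix:
  column j is the image x e_j x^(-1) of the basis vector e_j.\<close>
definition spin_pi :: "nat \<Rightarrow> (nat set \<Rightarrow> complex) \<Rightarrow> complex mat" where
  "spin_pi d x = mat d d (\<lambda>(i, j).
      cl_mult d (cl_mult d x (cl_basis d j)) (cl_rev x) {i})"

definition spin_tau :: "nat set \<Rightarrow> complex" where
  "spin_tau = (\<lambda>A. if A = {} then -1 else 0)"

text \<open>Complex conjugation of (tilde L_+^up)^C = Spin(d,C) with respect to the real
  form: coefficientwise conjugation in the real basis blades.  It is an
  anti-holomorphic automorphism fixing the real spin group, whose derivative at 1
  is the conjugation a + ib -> a - ib of Lie(tilde L_+^up) (x) C.\<close>
definition spin_conj :: "(nat set \<Rightarrow> complex) \<Rightarrow> (nat set \<Rightarrow> complex)" where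
  "spin_conj x = (\<lambda>A. cnj (x A))"

definition eta_mat :: "nat \<Rightarrow> real mat" where
  "eta_mat d = mat d d (\<lambda>(i, j). if i = j then (if i = 0 then 1 else -1) else 0)"

definition eta_form :: "nat \<Rightarrow> real vec \<Rightarrow> real vec \<Rightarrow> real" where
  "eta_form d x y = x \<bullet> (eta_mat d *\<^sub>v y)"

definition future_timelike :: "nat \<Rightarrow> real vec \<Rightarrow> bool" where
  "future_timelike d x \<longleftrightarrow> x \<in> carrier_vec d \<and> eta_form d x x > 0 \<and> x $ 0 > 0"

definition past_timelike :: "nat \<Rightarrow> real vec \<Rightarrow> bool" where
  "past_timelike d x \<longleftrightarrow> x \<in> carrier_vec d \<and> eta_form d x x > 0 \<and> x $ 0 < 0"

definition lorentz :: "nat \<Rightarrow> real mat \<Rightarrow> bool" where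
  "lorentz d L \<longleftrightarrow> L \<in> carrier_mat d d \<and> transpose_mat L * eta_mat d * L = eta_mat d"

definition L_plus_down :: "nat \<Rightarrow> real mat set" where
  "L_plus_down d = {L. lorentz d L \<and> det L = 1
      \<and> (\<forall>x. future_timelike d x \<longrightarrow> past_timelike d (L *\<^sub>v x))}"

definition flat_tilde_L_plus_down :: "nat \<Rightarrow> (nat set \<Rightarrow> complex) set" where
  "flat_tilde_L_plus_down d = {g \<in> spin_group d.
      \<exists>L \<in> L_plus_down d. spin_pi d g = map_mat complex_of_real L}"

end

theory Submission
  imports Defs
begin

text \<open>Conjugation fixes the basis vectors, so when \<open>\<pi>(g)\<close> is a real matrix the conjugate
  \<open>g\<^sup>*\<close> induces the same rotation as \<open>g\<close>. Hence \<open>(g\<^sup>*)\<^sup>-\<^sup>1 g\<close> commutes with every vector;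
  being even it is a scalar \<open>\<lambda>\<close>, and \<open>\<lambda>\<^sup>2 = 1\<close>, so \<open>g\<^sup>* = \<plusminus>g\<close>. If \<open>g\<^sup>* = g\<close>, all
  coefficients of \<open>g\<close> are real and the \<open>(0,0)\<close> entry of \<open>\<pi>(g)\<close> is a sum of squares,
  contradicting the reversal of time orientation. Hence \<open>g\<^sup>* = -g = g\<tau>\<close>.\<close>

definition blade_inversions :: "nat set \<Rightarrow> nat set \<Rightarrow> (nat \<times> nat) set" where
  "blade_inversions A B = {(a, b). a \<in> A \<and> b \<in> B \<and> b < a}"

lemma blade_sign_eq:
  "blade_sign A B = (-1) ^ card (blade_inversions A B) * (\<Prod>c\<in>A \<inter> B. eta_diag c)"
  unfolding blade_sign_def blade_inversions_def by simp

lemma finite_blade_inversions: "finite A \<Longrightarrow> finite (blade_inversions A B)"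
  by (rule finite_subset[of _ "Sigma A (\<lambda>a. {..<a})"]) (auto simp: blade_inversions_def)

lemma card_sym_diff:
  assumes "finite P" "finite Q"
  shows "card (sym_diff P Q) + 2 * card (P \<inter> Q) = card P + card Q"
proof -
  have "sym_diff P Q = (P \<union> Q) - (P \<inter> Q)" by blast
  then have "card (sym_diff P Q) = card (P \<union> Q) - card (P \<inter> Q)"
    using assms by (metis card_Diff_subset finite_Int inf_le1 le_supI1)
  moreover have "card (P \<inter> Q) \<le> card (P \<union> Q)" using assms by (intro card_mono) auto
  ultimately show ?thesis using card_Un_Int[OF assms] by simp
qed

lemma prod_sym_diff:
  fixes f :: "'a \<Rightarrow> 'b::comm_monoid_mult"
  assumes "\<And>x. f x * f x = 1" "finite P" "finite Q"
  shows "prod f (sym_diff P Q) = prod f P * prod f Q"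
proof -
  have "(P \<union> Q) - (P \<inter> Q) = sym_diff P Q" by blast
  then have "prod f (P \<union> Q) = prod f (sym_diff P Q) * prod f (P \<inter> Q)"
    using assms prod.subset_diff[of "P \<inter> Q" "P \<union> Q" f] by auto
  moreover have "prod f (P \<inter> Q) * prod f (P \<inter> Q) = 1"
    by (simp add: prod.distrib[symmetric] assms(1))
  ultimately show ?thesis
    using prod.union_inter[OF assms(2,3), of f] by (metis mult.assoc mult_1_right)
qed

lemma neg_one_power_card_sym_diff:
  assumes "finite P" "finite Q"
  shows "(-1::'a::comm_ring_1) ^ card (sym_diff P Q) = (-1) ^ card P * (-1) ^ card Q"
  using prod_sym_diff[of "\<lambda>_. -1::'a", OF _ assms] by simp

lemma eta_diag_square: "eta_diag c * eta_diag c = 1"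
  unfolding eta_diag_def by simp

lemma blade_sign_sym_diff_left:
  assumes "finite A" "finite B"
  shows "blade_sign (sym_diff A B) C = blade_sign A C * blade_sign B C"
proof -
  have "blade_inversions (sym_diff A B) C
      = sym_diff (blade_inversions A C) (blade_inversions B C)"
    unfolding blade_inversions_def by auto
  then have "(-1::complex) ^ card (blade_inversions (sym_diff A B) C)
      = (-1) ^ card (blade_inversions A C) * (-1) ^ card (blade_inversions B C)"
    using assms by (simp add: neg_one_power_card_sym_diff finite_blade_inversions)
  moreover have "sym_diff A B \<inter> C = sym_diff (A \<inter> C) (B \<inter> C)" by auto
  then have "(\<Prod>c\<in>sym_diff A B \<inter> C. eta_diag c)
      = (\<Prod>c\<in>A \<inter> C. eta_diag c) * (\<Prod>c\<in>B \<inter> C. eta_diag c)"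
    using assms by (simp add: prod_sym_diff eta_diag_square)
  ultimately show ?thesis unfolding blade_sign_eq by (simp add: ac_simps)
qed

lemma blade_sign_sym_diff_right:
  assumes "finite A"
  shows "blade_sign A (sym_diff B C) = blade_sign A B * blade_sign A C"
proof -
  have "blade_inversions A (sym_diff B C)
      = sym_diff (blade_inversions A B) (blade_inversions A C)"
    unfolding blade_inversions_def by auto
  then have "(-1::complex) ^ card (blade_inversions A (sym_diff B C))
      = (-1) ^ card (blade_inversions A B) * (-1) ^ card (blade_inversions A C)"
    using assms by (simp add: neg_one_power_card_sym_diff finite_blade_inversions)
  moreover have "A \<inter> sym_diff B C = sym_diff (A \<inter> B) (A \<inter> C)" by auto
  then have "(\<Prod>c\<in>A \<inter> sym_diff B C. eta_diag c)
      = (\<Prod>c\<in>A \<inter> B. eta_diag c) * (\<Prod>c\<in>A \<inter> C. eta_diag c)"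
    using assms by (simp add: prod_sym_diff eta_diag_square)
  ultimately show ?thesis unfolding blade_sign_eq by (simp add: ac_simps)
qed

lemma blade_sign_nonzero: "blade_sign A B \<noteq> 0"
  unfolding blade_sign_def eta_diag_def
  by (cases "finite (A \<inter> B)") (auto simp: prod_zero_iff)

lemma blade_sign_empty_left [simp]: "blade_sign {} C = 1"
  and blade_sign_empty_right [simp]: "blade_sign C {} = 1"
  unfolding blade_sign_def by simp_all

lemma blade_sign_singleton_swap:
  assumes "finite B" "j \<in> B" "even (card B)"
  shows "blade_sign B {j} = - blade_sign {j} B"
proof -
  let ?above = "{a\<in>B. j < a}" and ?below = "{b\<in>B. b < j}"
  have "blade_inversions B {j} = (\<lambda>a. (a, j)) ` ?above"
    unfolding blade_inversions_def by auto
  then have "card (blade_inversions B {j}) = card ?above"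
    by (simp add: card_image inj_on_def)
  moreover have "blade_inversions {j} B = (\<lambda>b. (j, b)) ` ?below"
    unfolding blade_inversions_def by auto
  then have "card (blade_inversions {j} B) = card ?below"
    by (simp add: card_image inj_on_def)
  moreover have "card B = card ?above + card ?below + 1"
  proof -
    have "B = insert j (?above \<union> ?below)" using assms(2) by auto
    then have "card B = card (insert j (?above \<union> ?below))" by (rule arg_cong)
    also have "\<dots> = Suc (card (?above \<union> ?below))"
      using assms(1) by (intro card_insert_disjoint) auto
    also have "\<dots> = card ?above + card ?below + 1"
      using assms(1) by (simp add: card_Un_disjoint disjoint_iff)
    finally show ?thesis .
  qed
  then have "(-1::complex) ^ card ?above = - ((-1) ^ card ?below)"
    using assms(3) by (auto simp: neg_one_power_add_eq_neg_one_power_diff)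
  moreover have "B \<inter> {j} = {j} \<inter> B" by auto
  ultimately show ?thesis unfolding blade_sign_eq by simp
qed

lemma cl_mult_apply:
  "cl_mult d x y C = (\<Sum>A\<in>Pow {..<d}. blade_sign A (sym_diff A C) * x A * y (sym_diff A C))"
  by (simp add: cl_mult_def)

lemma sum_Pow_sym_diff_reindex:
  assumes "A \<subseteq> {..<d}"
  shows "(\<Sum>B\<in>Pow {..<d}. f B) = (\<Sum>B\<in>Pow {..<d}. f (sym_diff A B))"
proof -
  have "sym_diff A (sym_diff A B) = B" for B by blast
  then show ?thesis
    by (intro sum.reindex_bij_witness[where i="sym_diff A" and j="sym_diff A"]) (use assms in auto)
qed

lemma blade_sign_cocycle:
  assumes "finite A" "finite B"
  shows "blade_sign (sym_diff A B) E * blade_sign A B = blade_sign A (sym_diff B E) * blade_sign B E"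
  using assms by (simp add: blade_sign_sym_diff_left blade_sign_sym_diff_right ac_simps)

lemma cl_mult_assoc: "cl_mult d (cl_mult d x y) z = cl_mult d x (cl_mult d y z)"
proof
  fix C
  let ?P = "Pow {..<d}"
  let ?s = blade_sign
  have "cl_mult d (cl_mult d x y) z C = (\<Sum>A\<in>?P. \<Sum>D\<in>?P.
      ?s D (sym_diff D C) * (?s A (sym_diff A D) * x A * y (sym_diff A D)) * z (sym_diff D C))"
    unfolding cl_mult_def by (subst sum.swap) (simp add: sum_distrib_left sum_distrib_right)
  also have "\<dots> = (\<Sum>A\<in>?P. \<Sum>B\<in>?P. ?s (sym_diff A B) (sym_diff (sym_diff A B) C)
      * (?s A (sym_diff A (sym_diff A B)) * x A * y (sym_diff A (sym_diff A B)))
      * z (sym_diff (sym_diff A B) C))"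
    by (rule sum.cong[OF refl], rule sum_Pow_sym_diff_reindex) auto
  also have "\<dots> = (\<Sum>A\<in>?P. \<Sum>B\<in>?P.
      ?s A (sym_diff A C) * x A * (?s B (sym_diff B (sym_diff A C)) * y B * z (sym_diff B (sym_diff A C))))"
  proof (intro sum.cong refl)
    fix A B assume "A \<in> ?P" "B \<in> ?P"
    then have "finite A" "finite B" by (auto intro: finite_subset)
    moreover have "sym_diff A (sym_diff A B) = B" "sym_diff (sym_diff A B) C = sym_diff B (sym_diff A C)"
      "sym_diff B (sym_diff B (sym_diff A C)) = sym_diff A C" by auto
    ultimately show "?s (sym_diff A B) (sym_diff (sym_diff A B) C)
        * (?s A (sym_diff A (sym_diff A B)) * x A * y (sym_diff A (sym_diff A B)))
        * z (sym_diff (sym_diff A B) C)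
      = ?s A (sym_diff A C) * x A * (?s B (sym_diff B (sym_diff A C)) * y B * z (sym_diff B (sym_diff A C)))"
      using blade_sign_cocycle[of A B "sym_diff B (sym_diff A C)"] by (simp add: ac_simps)
  qed
  also have "\<dots> = cl_mult d x (cl_mult d y z) C"
    unfolding cl_mult_def by (simp add: sum_distrib_left)
  finally show "cl_mult d (cl_mult d x y) z C = cl_mult d x (cl_mult d y z) C" .
qed

definition cl_scale :: "complex \<Rightarrow> (nat set \<Rightarrow> complex) \<Rightarrow> (nat set \<Rightarrow> complex)" where
  "cl_scale c x = (\<lambda>A. c * x A)"

lemma cl_mult_scale_left: "cl_mult d (cl_scale c x) y = cl_scale c (cl_mult d x y)"
  and cl_mult_scale_right: "cl_mult d x (cl_scale c y) = cl_scale c (cl_mult d x y)"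
  and cl_rev_scale: "cl_rev (cl_scale c x) = cl_scale c (cl_rev x)"
  unfolding cl_mult_def cl_rev_def cl_scale_def by (simp_all add: sum_distrib_left ac_simps)

lemma cl_elem_cl_mult: "cl_elem d y \<Longrightarrow> cl_elem d (cl_mult d x y)"
  unfolding cl_elem_def cl_mult_def
proof (intro allI impI sum.neutral ballI)
  fix C A assume "\<forall>A. \<not> A \<subseteq> {..<d} \<longrightarrow> y A = 0" "\<not> C \<subseteq> {..<d}" "A \<in> Pow {..<d}"
  moreover from this(2,3) have "\<not> sym_diff A C \<subseteq> {..<d}" by blast
  ultimately show "blade_sign A (sym_diff A C) * x A * y (sym_diff A C) = 0" by simp
qed

lemma cl_mult_one_left: "cl_mult d cl_one x = x"
proof
  fix C
  have "cl_mult d cl_one x C = (\<Sum>A\<in>Pow {..<d}. if A = {} then x C else 0)"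
    unfolding cl_mult_def cl_one_def by (intro sum.cong) auto
  then show "cl_mult d cl_one x C = x C" by simp
qed

lemma cl_mult_one_right: "cl_elem d x \<Longrightarrow> cl_mult d x cl_one = x"
proof
  fix C assume "cl_elem d x"
  have "cl_mult d x cl_one C = (\<Sum>A\<in>Pow {..<d}. if A = C then x C else 0)"
    unfolding cl_mult_def cl_one_def by (intro sum.cong) auto
  with \<open>cl_elem d x\<close> show "cl_mult d x cl_one C = x C" unfolding cl_elem_def by auto
qed

lemma cl_even_cl_mult:
  assumes "cl_even x" "cl_even y"
  shows "cl_even (cl_mult d x y)"
  unfolding cl_even_def
proof (intro allI impI)
  fix C :: "nat set" assume "odd (card C)"
  then have "finite C" using card.infinite by fastforce
  have "x A = 0 \<or> y (sym_diff A C) = 0" if "A \<in> Pow {..<d}" for A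
  proof -
    from that have "finite A" by (auto intro: finite_subset)
    with card_sym_diff[OF this \<open>finite C\<close>] \<open>odd (card C)\<close>
    have "odd (card A) \<or> odd (card (sym_diff A C))" by presburger
    with assms show ?thesis unfolding cl_even_def by auto
  qed
  then show "cl_mult d x y C = 0" unfolding cl_mult_def by (auto intro!: sum.neutral)
qed

lemma cl_even_cl_rev: "cl_even x \<Longrightarrow> cl_even (cl_rev x)"
  unfolding cl_rev_def cl_even_def by simp

lemma cnj_blade_sign [simp]: "cnj (blade_sign A B) = blade_sign A B"
proof -
  have "cnj (eta_diag c) = eta_diag c" for c by (simp add: eta_diag_def)
  then show ?thesis by (simp add: blade_sign_def)
qed

lemma spin_conj_cl_mult: "spin_conj (cl_mult d x y) = cl_mult d (spin_conj x) (spin_conj y)"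
  and spin_conj_cl_rev: "spin_conj (cl_rev x) = cl_rev (spin_conj x)"
  and spin_conj_cl_one: "spin_conj cl_one = cl_one"
  and spin_conj_cl_basis: "spin_conj (cl_basis d j) = cl_basis d j"
  unfolding spin_conj_def cl_mult_def cl_rev_def cl_one_def cl_basis_def cl_vec_def by auto

lemma cl_elem_spin_conj: "cl_elem d x \<Longrightarrow> cl_elem d (spin_conj x)"
  and cl_even_spin_conj: "cl_even x \<Longrightarrow> cl_even (spin_conj x)"
  unfolding spin_conj_def cl_elem_def cl_even_def by simp_all

lemma cl_basis_apply: "j < d \<Longrightarrow> cl_basis d j S = (if S = {j} then 1 else 0)"
  unfolding cl_basis_def cl_vec_def by auto

lemma cl_mult_basis_right:
  assumes "j < d" "C \<subseteq> {..<d}"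
  shows "cl_mult d x (cl_basis d j) C = blade_sign (sym_diff C {j}) {j} * x (sym_diff C {j})"
proof -
  have "blade_sign A (sym_diff A C) * x A * cl_basis d j (sym_diff A C)
      = (if A = sym_diff C {j} then blade_sign A {j} * x A else 0)" for A
  proof (cases "A = sym_diff C {j}")
    case True
    then have "sym_diff A C = {j}" by blast
    with True assms(1) show ?thesis by (simp add: cl_basis_apply)
  next
    case False
    then have "sym_diff A C \<noteq> {j}" by blast
    with False assms(1) show ?thesis by (simp add: cl_basis_apply)
  qed
  then have "cl_mult d x (cl_basis d j) C
      = (\<Sum>A\<in>Pow {..<d}. if A = sym_diff C {j} then blade_sign A {j} * x A else 0)"
    unfolding cl_mult_def by simp
  also have "\<dots> = blade_sign (sym_diff C {j}) {j} * x (sym_diff C {j})"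
    using assms by (simp add: sum.delta' subset_iff)
  finally show ?thesis .
qed

lemma cl_mult_basis_left:
  assumes "j < d" "C \<subseteq> {..<d}"
  shows "cl_mult d (cl_basis d j) x C = blade_sign {j} (sym_diff {j} C) * x (sym_diff {j} C)"
proof -
  have "cl_mult d (cl_basis d j) x C
      = (\<Sum>A\<in>Pow {..<d}. if A = {j} then blade_sign {j} (sym_diff {j} C) * x (sym_diff {j} C) else 0)"
    using assms(1) unfolding cl_mult_def by (intro sum.cong) (simp_all add: cl_basis_apply)
  also have "\<dots> = blade_sign {j} (sym_diff {j} C) * x (sym_diff {j} C)"
    using assms(1) by (simp add: sum.delta')
  finally show ?thesis .
qed

lemma cl_even_central_eq_scalar:
  assumes "cl_elem d h" "cl_even h"
    and comm: "\<And>j. j < d \<Longrightarrow> cl_mult d h (cl_basis d j) = cl_mult d (cl_basis d j) h"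
  shows "h = cl_scale (h {}) cl_one"
proof -
  have "h B = 0" if "B \<noteq> {}" "B \<subseteq> {..<d}" "even (card B)" for B
  proof -
    \<comment> \<open>the blade \<open>e\<^sub>B\<close> anticommutes with \<open>e\<^sub>j\<close> for every \<open>j \<in> B\<close>\<close>
    obtain j where "j \<in> B" using \<open>B \<noteq> {}\<close> by auto
    with \<open>B \<subseteq> {..<d}\<close> have "j < d" "sym_diff B {j} \<subseteq> {..<d}" by auto
    moreover have "sym_diff (sym_diff B {j}) {j} = B" "sym_diff {j} (sym_diff B {j}) = B" by auto
    ultimately have "blade_sign B {j} * h B = blade_sign {j} B * h B"
      using comm[of j] cl_mult_basis_right[of j d "sym_diff B {j}" h]
        cl_mult_basis_left[of j d "sym_diff B {j}" h] by metis
    moreover have "blade_sign {j} B = - blade_sign B {j}"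
      using blade_sign_singleton_swap[of B j] that \<open>j \<in> B\<close> finite_subset by fastforce
    ultimately show "h B = 0" using blade_sign_nonzero[of B "{j}"] by simp
  qed
  moreover have "h B = 0" if "\<not> B \<subseteq> {..<d} \<or> odd (card B)" for B
    using assms(1,2) that unfolding cl_elem_def cl_even_def by blast
  ultimately have "h B = 0" if "B \<noteq> {}" for B using that by blast
  then show ?thesis unfolding cl_scale_def cl_one_def by (auto intro!: ext)
qed

lemma spin_conj_cl_vec: "spin_conj (cl_vec d v) = cl_vec d (\<lambda>i. cnj (v i))"
  unfolding spin_conj_def cl_vec_def by (auto simp: fun_eq_iff)

lemma cl_elem_cl_vec: "cl_elem d (cl_vec d v)"
  unfolding cl_elem_def cl_vec_def by auto

lemma spin_conj_in_spin_group:
  assumes "g \<in> spin_group d"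
  shows "spin_conj g \<in> spin_group d"
proof -
  let ?c = "spin_conj g"
  have "\<exists>w. cl_mult d (cl_mult d ?c (cl_vec d v)) (cl_rev ?c) = cl_vec d w" for v
  proof -
    obtain w where w: "cl_mult d (cl_mult d g (cl_vec d (\<lambda>i. cnj (v i)))) (cl_rev g) = cl_vec d w"
      using assms unfolding spin_group_def by blast
    have "spin_conj (cl_vec d (\<lambda>i. cnj (v i))) = cl_vec d v" by (simp add: spin_conj_cl_vec)
    then have "cl_mult d (cl_mult d ?c (cl_vec d v)) (cl_rev ?c)
        = spin_conj (cl_mult d (cl_mult d g (cl_vec d (\<lambda>i. cnj (v i)))) (cl_rev g))"
      by (simp only: spin_conj_cl_mult spin_conj_cl_rev)
    also have "\<dots> = cl_vec d (\<lambda>i. cnj (w i))" by (simp only: w spin_conj_cl_vec)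
    finally show ?thesis by blast
  qed
  moreover have "cl_mult d ?c (cl_rev ?c) = cl_one" "cl_mult d (cl_rev ?c) ?c = cl_one"
    using assms unfolding spin_group_def
    by (simp_all add: spin_conj_cl_one flip: spin_conj_cl_rev spin_conj_cl_mult)
  moreover have "cl_elem d ?c" "cl_even ?c"
    using assms unfolding spin_group_def by (simp_all add: cl_elem_spin_conj cl_even_spin_conj)
  ultimately show ?thesis unfolding spin_group_def by blast
qed

lemma spin_pi_real_index:
  assumes "spin_pi d g = map_mat complex_of_real L" "i < d" "j < d"
  shows "spin_pi d g $$ (i, j) = complex_of_real (L $$ (i, j))"
proof -
  have "dim_row L = d" "dim_col L = d"
    using arg_cong[OF assms(1), of dim_row] arg_cong[OF assms(1), of dim_col]
    by (simp_all add: spin_pi_def)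
  with assms show ?thesis by simp
qed

lemma spin_conj_sandwich_basis:
  assumes "g \<in> spin_group d" "spin_pi d g = map_mat complex_of_real L" "j < d"
  shows "cl_mult d (cl_mult d (spin_conj g) (cl_basis d j)) (cl_rev (spin_conj g))
    = cl_mult d (cl_mult d g (cl_basis d j)) (cl_rev g)"
proof -
  obtain w where w: "cl_mult d (cl_mult d g (cl_basis d j)) (cl_rev g) = cl_vec d w"
    using assms(1) unfolding spin_group_def cl_basis_def by blast
  have "cnj (w i) = w i" if "i < d" for i
  proof -
    have "w i = cl_vec d w {i}" using that by (simp add: cl_vec_def)
    also have "\<dots> = spin_pi d g $$ (i, j)"
      using that assms(3) by (simp add: spin_pi_def w)
    also have "\<dots> = complex_of_real (L $$ (i, j))"
      using assms(2) that assms(3) by (rule spin_pi_real_index)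
    finally show ?thesis by simp
  qed
  then have "spin_conj (cl_vec d w) = cl_vec d w"
    unfolding spin_conj_cl_vec by (auto simp: cl_vec_def fun_eq_iff)
  with w show ?thesis
    by (metis spin_conj_cl_mult spin_conj_cl_rev spin_conj_cl_basis)
qed

lemma spin_same_sandwich_eq_scale:
  assumes "g \<in> spin_group d" "c \<in> spin_group d"
    and same: "\<And>j. j < d \<Longrightarrow> cl_mult d (cl_mult d c (cl_basis d j)) (cl_rev c)
      = cl_mult d (cl_mult d g (cl_basis d j)) (cl_rev g)"
  obtains s where "g = cl_scale s c" "s * s = 1"
proof -
  have g: "cl_elem d g" "cl_even g" "cl_mult d g (cl_rev g) = cl_one" "cl_mult d (cl_rev g) g = cl_one"
    and c: "cl_elem d c" "cl_even c" "cl_mult d c (cl_rev c) = cl_one" "cl_mult d (cl_rev c) c = cl_one"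
    using assms(1,2) unfolding spin_group_def by auto
  define h where "h = cl_mult d (cl_rev c) g"
  have "cl_mult d h (cl_basis d j) = cl_mult d (cl_basis d j) h" if "j < d" for j
  proof -
    let ?e = "cl_basis d j"
    have "cl_elem d (cl_mult d g ?e)"
      unfolding cl_basis_def by (intro cl_elem_cl_mult cl_elem_cl_vec)
    then have "cl_mult d g ?e = cl_mult d (cl_mult d g ?e) (cl_mult d (cl_rev g) g)"
      by (simp add: g(4) cl_mult_one_right)
    also have "\<dots> = cl_mult d (cl_mult d (cl_mult d g ?e) (cl_rev g)) g"
      by (simp only: cl_mult_assoc)
    also have "\<dots> = cl_mult d (cl_mult d c ?e) h"
      unfolding same[OF that, symmetric] h_def by (simp add: cl_mult_assoc)
    finally have "cl_mult d h ?e = cl_mult d (cl_mult d (cl_rev c) c) (cl_mult d ?e h)"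
      unfolding h_def by (simp add: cl_mult_assoc)
    then show ?thesis by (simp add: c(4) cl_mult_one_left)
  qed
  moreover have "cl_elem d h" "cl_even h"
    unfolding h_def using g c by (simp_all add: cl_elem_cl_mult cl_even_cl_mult cl_even_cl_rev)
  ultimately have h: "h = cl_scale (h {}) cl_one" by (rule cl_even_central_eq_scalar[rotated 2])
  have "g = cl_mult d c h"
    unfolding h_def by (simp add: cl_mult_assoc[symmetric] c(3) cl_mult_one_left)
  also have "\<dots> = cl_scale (h {}) c"
    by (subst h) (simp add: cl_mult_scale_right cl_mult_one_right c(1))
  finally have gc: "g = cl_scale (h {}) c" .
  have "cl_one = cl_scale (h {}) (cl_scale (h {}) cl_one)"
    using g(3) c(3) unfolding gc by (simp add: cl_rev_scale cl_mult_scale_left cl_mult_scale_right)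
  then have "h {} * h {} = 1"
    by (metis cl_one_def cl_scale_def mult.right_neutral)
  with gc show ?thesis by (rule that)
qed

lemma card_blade_inversions_self:
  assumes "finite B"
  shows "card (blade_inversions B B) = card B * (card B - 1) div 2"
proof -
  let ?I = "blade_inversions B B"
  let ?D = "(\<lambda>a. (a, a)) ` B"
  have "finite ?I" using assms by (rule finite_blade_inversions)
  have "B \<times> B = (?I \<union> prod.swap ` ?I) \<union> ?D" unfolding blade_inversions_def by auto
  then have "card B * card B = card ((?I \<union> prod.swap ` ?I) \<union> ?D)"
    by (metis card_cartesian_product)
  also have "\<dots> = card ?I + card (prod.swap ` ?I) + card ?D"
    using \<open>finite ?I\<close> assms by (subst card_Un_disjoint card_Un_disjoint; auto simp: blade_inversions_def)+
  also have "\<dots> = 2 * card ?I + card B"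
    by (simp add: card_image[OF inj_swap] card_image inj_on_def)
  finally show ?thesis by (simp add: diff_mult_distrib2)
qed

lemma prod_eta_diag:
  assumes "finite B"
  shows "(\<Prod>c\<in>B. eta_diag c) = (-1) ^ card (B - {0})"
proof -
  have "(\<Prod>c\<in>B. eta_diag c) = (\<Prod>c\<in>B - {0}. eta_diag c)"
    using assms by (intro prod.mono_neutral_right) (auto simp: eta_diag_def)
  also have "\<dots> = (\<Prod>c\<in>B - {0}. -1)" by (intro prod.cong) (auto simp: eta_diag_def)
  finally show ?thesis by simp
qed

lemma blade_sign_time_reversion:
  assumes "finite B"
  shows "blade_sign (sym_diff {0} B) B * blade_sign B {0} * (-1) ^ (card B * (card B - 1) div 2) = 1"
proof -
  have "blade_inversions {0} B = {}" "blade_inversions B {0} = (\<lambda>a. (a, 0)) ` (B - {0})"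
    unfolding blade_inversions_def by auto
  moreover have "{0} \<inter> B = B \<inter> {0}" "(\<Prod>c\<in>B \<inter> {0}. eta_diag c) = 1"
    by (auto simp: eta_diag_def Int_insert_right)
  ultimately have "blade_sign {0} B = 1" "blade_sign B {0} = (-1) ^ card (B - {0})"
    by (simp_all add: blade_sign_eq card_image inj_on_def)
  moreover have "blade_sign B B = (-1) ^ (card B * (card B - 1) div 2) * (-1) ^ card (B - {0})"
    using assms by (simp add: blade_sign_eq card_blade_inversions_self prod_eta_diag)
  moreover have "(-1::complex) ^ n * (-1) ^ n = 1" for n by (simp flip: power_add)
  ultimately show ?thesis
    using assms blade_sign_sym_diff_left[of "{0}" B B]
    by (simp add: algebra_simps)
qed

lemma spin_pi_time_time:
  assumes "0 < d"
  shows "spin_pi d g $$ (0, 0) = (\<Sum>B\<in>Pow {..<d}. g B ^ 2)"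
proof -
  have "spin_pi d g $$ (0, 0) = cl_mult d (cl_mult d g (cl_basis d 0)) (cl_rev g) {0}"
    unfolding spin_pi_def using assms by simp
  also have "\<dots> = (\<Sum>A\<in>Pow {..<d}.
      blade_sign A (sym_diff A {0}) * cl_mult d g (cl_basis d 0) A * cl_rev g (sym_diff A {0}))"
    by (rule cl_mult_apply)
  also have "\<dots> = (\<Sum>B\<in>Pow {..<d}. blade_sign (sym_diff {0} B) (sym_diff (sym_diff {0} B) {0})
      * cl_mult d g (cl_basis d 0) (sym_diff {0} B) * cl_rev g (sym_diff (sym_diff {0} B) {0}))"
    using assms by (intro sum_Pow_sym_diff_reindex) auto
  also have "\<dots> = (\<Sum>B\<in>Pow {..<d}. g B ^ 2)"
  proof (intro sum.cong refl)
    fix B assume "B \<in> Pow {..<d}"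
    then have "finite B" "sym_diff {0} B \<subseteq> {..<d}" using assms by (auto intro: finite_subset)
    moreover have B: "sym_diff (sym_diff {0} B) {0} = B" by auto
    ultimately have "cl_mult d g (cl_basis d 0) (sym_diff {0} B) = blade_sign B {0} * g B"
      using assms cl_mult_basis_right[of 0 d "sym_diff {0} B" g] by simp
    then have "blade_sign (sym_diff {0} B) (sym_diff (sym_diff {0} B) {0})
        * cl_mult d g (cl_basis d 0) (sym_diff {0} B) * cl_rev g (sym_diff (sym_diff {0} B) {0})
      = (blade_sign (sym_diff {0} B) B * blade_sign B {0} * (-1) ^ (card B * (card B - 1) div 2))
        * g B ^ 2"
      unfolding B by (simp add: cl_rev_def power2_eq_square mult_ac)
    with blade_sign_time_reversion[OF \<open>finite B\<close>]
    show "blade_sign (sym_diff {0} B) (sym_diff (sym_diff {0} B) {0})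
        * cl_mult d g (cl_basis d 0) (sym_diff {0} B) * cl_rev g (sym_diff (sym_diff {0} B) {0})
      = g B ^ 2" by simp
  qed
  finally show ?thesis .
qed

lemma spin_pi_time_time_of_real:
  assumes "spin_conj g = g" "0 < d"
  shows "spin_pi d g $$ (0, 0) = complex_of_real (\<Sum>B\<in>Pow {..<d}. Re (g B) ^ 2)"
proof -
  have "cnj (g B) = g B" for B using fun_cong[OF assms(1), of B] by (simp add: spin_conj_def)
  with assms(2) show ?thesis by (simp add: spin_pi_time_time complex_eq_iff power2_eq_square)
qed

lemma L_plus_down_time_time_neg:
  assumes "L \<in> L_plus_down d" "0 < d"
  shows "L $$ (0, 0) < 0"
proof -
  let ?e = "unit_vec d 0 :: real vec"
  have "L \<in> carrier_mat d d" using assms(1) unfolding L_plus_down_def lorentz_def by auto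
  have "eta_form d ?e ?e = (eta_mat d *\<^sub>v ?e) $ 0"
    unfolding eta_form_def using assms(2)
    by (intro scalar_prod_left_unit mult_mat_vec_carrier[of _ d d]) (auto simp: eta_mat_def)
  then have "future_timelike d ?e"
    using assms(2) by (simp add: future_timelike_def eta_mat_def)
  then have "past_timelike d (L *\<^sub>v ?e)"
    using assms(1) unfolding L_plus_down_def by auto
  with \<open>L \<in> carrier_mat d d\<close> assms(2) show ?thesis by (simp add: past_timelike_def)
qed

lemma cl_mult_spin_tau:
  assumes "cl_elem d x"
  shows "cl_mult d x spin_tau = (\<lambda>A. - x A)"
proof -
  have tau: "spin_tau = cl_scale (-1) cl_one" by (auto simp: spin_tau_def cl_scale_def cl_one_def)
  show ?thesis unfolding tau cl_mult_scale_right cl_mult_one_right[OF assms] by (simp add: cl_scale_def)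
qed

theorem mainTheorem9:
  fixes d :: nat and g :: "nat set \<Rightarrow> complex"
  assumes "d \<ge> 3"
    and "g \<in> flat_tilde_L_plus_down d"
  shows "spin_conj g = cl_mult d g spin_tau"
proof -
  obtain L where g: "g \<in> spin_group d" and L: "L \<in> L_plus_down d"
    and pi_g: "spin_pi d g = map_mat complex_of_real L"
    using assms(2) unfolding flat_tilde_L_plus_down_def by auto
  obtain s where gs: "g = cl_scale s (spin_conj g)" and "s * s = 1"
    using spin_same_sandwich_eq_scale[OF g spin_conj_in_spin_group[OF g]]
      spin_conj_sandwich_basis[OF g pi_g] by blast
  have "s \<noteq> 1"
  proof
    assume "s = 1"
    with gs have "spin_conj g = g" by (simp add: cl_scale_def fun_eq_iff)
    moreover have "0 < d" using assms(1) by simp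
    ultimately have "complex_of_real (L $$ (0, 0)) = complex_of_real (\<Sum>B\<in>Pow {..<d}. Re (g B) ^ 2)"
      using spin_pi_real_index[OF pi_g] spin_pi_time_time_of_real[of g d] by metis
    then have "L $$ (0, 0) \<ge> 0" by (simp only: of_real_eq_iff) (simp add: sum_nonneg)
    with L_plus_down_time_time_neg[OF L \<open>0 < d\<close>] show False by simp
  qed
  with \<open>s * s = 1\<close> have "s = -1" by (simp add: square_eq_1_iff)
  then have "cnj (g A) = - g A" for A
    using fun_cong[OF gs, of A] by (simp add: cl_scale_def spin_conj_def complex_eq_iff)
  then have "spin_conj g = (\<lambda>A. - g A)" by (simp add: spin_conj_def)
  with g show ?thesis by (simp add: cl_mult_spin_tau spin_group_def)
qed

end
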